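(* Let $d\ge 2$. Up to isomorphism there is exactly one primitive $d$-uniform monomial sunflower whose sunflower has a core of size $d-1$. Its multiset of edges consists of $2d+2$ distinct edges, each of multiplicity one: $2d$ petals and $2$ matching edges.
   Context: A hypergraph is $d$-uniform if every edge has exactly $d$ vertices. A sunflower is a $d$-uniform hypergraph with at least two edges (petals) such that any two distinct petals intersect exactly in a fixed nonempty set $C$, the core. A $d$-uniform monomial sunflower is a multihypergraph $\mathcal H$ whose support (its set of distinct edges) consists of two parts: - a sunflower; - a perfect matching of the sunflower's non-core vertices by $d$-element edges disjoint from the core. It is also required that the edge copies of $\mathcal H$ admit a balanced bicolouring, i.e. a red/blue colouring such that every vertex lies in equally many red as blue copies. $\mathcal H$ is primitive if some balanced bicolouring has no nonempty proper balanced sub-multiset with colours kept. *)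

theory Defs
  imports Main "HOL-Library.Multiset"
begin

definition sunflower :: "nat \<Rightarrow> 'a set set \<Rightarrow> 'a set \<Rightarrow> bool" where
  "sunflower d S C \<longleftrightarrow> finite S \<and> card S \<ge> 2 \<and> C \<noteq> {} \<and>
     (\<forall>e\<in>S. finite e \<and> card e = d) \<and>
     (\<forall>e1\<in>S. \<forall>e2\<in>S. e1 \<noteq> e2 \<longrightarrow> e1 \<inter> e2 = C)"

definition perfect_matching :: "nat \<Rightarrow> 'a set set \<Rightarrow> 'a set \<Rightarrow> bool" where
  "perfect_matching d M V \<longleftrightarrow>
     (\<forall>e\<in>M. finite e \<and> card e = d \<and> e \<subseteq> V) \<and>
     (\<forall>e1\<in>M. \<forall>e2\<in>M. e1 \<noteq> e2 \<longrightarrow> e1 \<inter> e2 = {}) \<and>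
     \<Union>M = V"

definition balanced :: "'a set multiset \<Rightarrow> 'a set multiset \<Rightarrow> bool" where
  "balanced R B \<longleftrightarrow> (\<forall>v. size (filter_mset (\<lambda>e. v \<in> e) R) = size (filter_mset (\<lambda>e. v \<in> e) B))"

definition balanced_bicolouring :: "'a set multiset \<Rightarrow> 'a set multiset \<Rightarrow> 'a set multiset \<Rightarrow> bool" where
  "balanced_bicolouring H R B \<longleftrightarrow> R + B = H \<and> balanced R B"

definition monomial_sunflower ::
  "nat \<Rightarrow> 'a set multiset \<Rightarrow> 'a set set \<Rightarrow> 'a set \<Rightarrow> 'a set set \<Rightarrow> bool" where
  "monomial_sunflower d H S C M \<longleftrightarrow>
     sunflower d S C \<and> perfect_matching d M (\<Union>S - C) \<and>
     set_mset H = S \<union> M \<and> (\<exists>R B. balanced_bicolouring H R B)"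

definition primitive :: "'a set multiset \<Rightarrow> bool" where
  "primitive H \<longleftrightarrow> (\<exists>R B. balanced_bicolouring H R B \<and>
     \<not> (\<exists>R' B'. R' \<subseteq># R \<and> B' \<subseteq># B \<and> R' + B' \<noteq> {#} \<and> R' + B' \<noteq> H \<and> balanced R' B'))"

definition mh_isomorphic :: "'a set multiset \<Rightarrow> 'b set multiset \<Rightarrow> bool" where
  "mh_isomorphic H H' \<longleftrightarrow> (\<exists>f. bij_betw f (\<Union>(set_mset H)) (\<Union>(set_mset H')) \<and>
     image_mset (\<lambda>e. f ` e) H = H')"

end

theory Submission
  imports Defs
begin

(* When the core C has d - 1 vertices every petal is C plus one
   vertex, so a vertex v outside the core lies in exactly one petal, petal C v,
   and one matching edge.  In the canonical configuration (two matching edges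
   A and B) one colour class consists of the petals through A together with B,
   the other of the petals through B together with A.

   Then, for an arbitrary monomial sunflower with core of
   size d - 1, the key lemma balanced_pair_contains_canonical shows that every
   nonempty balanced pair of sub-multisets with disjoint supports contains a
   full canonical configuration, by propagating colours along petals and
   matching edges.  Applied to a primitive bicolouring this shows that H is
   canonical; applied to sub-multisets of the canonical bicolouring it shows
   that the canonical configuration is primitive. *)

section \<open>Petals and the canonical configuration\<close>

definition petal :: "'a set \<Rightarrow> 'a \<Rightarrow> 'a set" where
  "petal C x = insert x C"

lemma petal_inj_on: "C \<inter> A = {} \<Longrightarrow> inj_on (petal C) A"
  by (auto simp: inj_on_def petal_def)

text \<open>One colour class of the canonical configuration: the petals through A
  together with the matching edge B.\<close>
definition half :: "'a set \<Rightarrow> 'a set \<Rightarrow> 'a set \<Rightarrow> 'a set set" where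
  "half C A B = insert B (petal C ` A)"

definition canonical_config :: "nat \<Rightarrow> 'a set \<Rightarrow> 'a set \<Rightarrow> 'a set \<Rightarrow> bool" where
  "canonical_config d C A B \<longleftrightarrow> 2 \<le> d \<and> finite C \<and> card C = d - 1 \<and>
     finite A \<and> finite B \<and> card A = d \<and> card B = d \<and>
     A \<inter> B = {} \<and> C \<inter> A = {} \<and> C \<inter> B = {}"

definition canonical_msf :: "'a set \<Rightarrow> 'a set \<Rightarrow> 'a set \<Rightarrow> 'a set multiset" where
  "canonical_msf C A B = mset_set (half C A B) + mset_set (half C B A)"

lemma canonical_config_sym: "canonical_config d C A B \<Longrightarrow> canonical_config d C B A"
  by (auto simp: canonical_config_def)

lemma canonical_config_nonempty:
  assumes "canonical_config d C A B"
  shows "A \<noteq> {}" "B \<noteq> {}" "C \<noteq> {}"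
  using assms by (auto simp: canonical_config_def)

lemma half_incident:
  assumes "canonical_config d C A B"
  shows "{e \<in> half C A B. v \<in> e} =
    (if v \<in> C then petal C ` A else if v \<in> A then {petal C v} else if v \<in> B then {B} else {})"
  using assms by (auto simp: canonical_config_def half_def petal_def)

lemma balanced_mset_set:
  assumes "finite X" "finite Y"
  shows "balanced (mset_set X) (mset_set Y) \<longleftrightarrow>
    (\<forall>v. card {e \<in> X. v \<in> e} = card {e \<in> Y. v \<in> e})"
  using assms by (simp add: balanced_def filter_mset_mset_set)

lemma canonical_balanced:
  assumes c: "canonical_config d C A B"
  shows "balanced (mset_set (half C A B)) (mset_set (half C B A))"
proof -
  have "card (petal C ` A) = card (petal C ` B)"
    using c by (simp add: card_image petal_inj_on canonical_config_def)
  moreover have "A \<inter> B = {}" using c by (simp add: canonical_config_def)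
  ultimately have "card {e \<in> half C A B. v \<in> e} = card {e \<in> half C B A. v \<in> e}" for v
    unfolding half_incident[OF c] half_incident[OF canonical_config_sym[OF c]] by auto
  then show ?thesis
    using c by (simp add: balanced_mset_set half_def canonical_config_def)
qed

text \<open>Petals contain the core, matching edges avoid it; hence the two colour
  classes share no edge and each has d + 1 distinct edges.\<close>
lemma half_facts:
  assumes c: "canonical_config d C A B"
  shows "half C A B \<inter> half C B A = {}" and "A \<notin> half C A B"
    and "card (half C A B) = d + 1"
proof -
  obtain z where z: "z \<in> C" using canonical_config_nonempty[OF c] by blast
  have AB: "A \<noteq> B" "A \<inter> C = {}" "B \<inter> C = {}"
    using c canonical_config_nonempty[OF c] by (auto simp: canonical_config_def)
  have no_petal: "petal C x \<noteq> A" "petal C x \<noteq> B" for x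
    using AB z by (auto simp: petal_def)
  have "petal C x \<noteq> petal C y" if "x \<in> A" "y \<in> B" for x y
    using c that by (auto simp: canonical_config_def petal_def)
  then show "half C A B \<inter> half C B A = {}"
    unfolding half_def using AB(1) no_petal by blast
  show "A \<notin> half C A B" unfolding half_def using AB(1) no_petal by blast
  have "B \<notin> petal C ` A" using no_petal by blast
  then show "card (half C A B) = d + 1"
    using c petal_inj_on[of C A]
    by (simp add: half_def canonical_config_def card_image Int_commute)
qed

lemma canonical_msf_set:
  assumes "canonical_config d C A B"
  shows "set_mset (canonical_msf C A B) = petal C ` (A \<union> B) \<union> {A, B}"
  using assms by (auto simp: canonical_msf_def half_def canonical_config_def)

lemma canonical_msf_counts:
  assumes c: "canonical_config d C A B"
  shows "\<forall>e. count (canonical_msf C A B) e \<le> 1" "size (canonical_msf C A B) = 2 * d + 2"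
    "card (petal C ` (A \<union> B)) = 2 * d" "card {A, B} = 2"
proof -
  have fin: "finite (half C A B)" "finite (half C B A)"
    using c by (auto simp: half_def canonical_config_def)
  have disj: "half C A B \<inter> half C B A = {}"
    using half_facts(1)[OF c] .
  show "\<forall>e. count (canonical_msf C A B) e \<le> 1"
    using fin disj by (auto simp: canonical_msf_def count_mset_set')
  show "size (canonical_msf C A B) = 2 * d + 2"
    using half_facts(3)[OF c] half_facts(3)[OF canonical_config_sym[OF c]]
    by (simp add: canonical_msf_def)
  have "inj_on (petal C) (A \<union> B)"
    using c by (intro petal_inj_on) (auto simp: canonical_config_def)
  then show "card (petal C ` (A \<union> B)) = 2 * d"
    using c by (simp add: card_image card_Un_disjoint canonical_config_def)
  have "A \<noteq> B" using c canonical_config_nonempty[OF c] by (auto simp: canonical_config_def)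
  then show "card {A, B} = 2" by simp
qed

lemma canonical_bicolouring:
  assumes "canonical_config d C A B"
  shows "balanced_bicolouring (canonical_msf C A B) (mset_set (half C A B)) (mset_set (half C B A))"
  using canonical_balanced[OF assms] by (simp add: balanced_bicolouring_def canonical_msf_def)

lemma canonical_is_monomial_sunflower:
  assumes c: "canonical_config d C A B"
  shows "monomial_sunflower d (canonical_msf C A B) (petal C ` (A \<union> B)) C {A, B}"
proof -
  let ?S = "petal C ` (A \<union> B)"
  have fC: "finite C" and cC: "card C = d - 1" and d2: "2 \<le> d"
    using c by (auto simp: canonical_config_def)
  have "sunflower d ?S C"
    unfolding sunflower_def
  proof (intro conjI ballI impI)
    show "finite ?S" using c by (auto simp: canonical_config_def)
    show "2 \<le> card ?S" using canonical_msf_counts(3)[OF c] d2 by simp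
    show "C \<noteq> {}" using canonical_config_nonempty[OF c] by blast
  next
    fix e assume "e \<in> ?S"
    then obtain x where "x \<in> A \<union> B" "x \<notin> C" "e = petal C x"
      using c by (auto simp: canonical_config_def)
    then show "finite e" "card e = d" using fC cC d2 by (auto simp: petal_def)
  next
    fix e1 e2 assume "e1 \<in> ?S" "e2 \<in> ?S" "e1 \<noteq> e2"
    then show "e1 \<inter> e2 = C" using c by (auto simp: canonical_config_def petal_def)
  qed
  moreover have "\<Union>?S - C = A \<union> B"
    using c canonical_config_nonempty[OF c] by (auto simp: canonical_config_def petal_def)
  then have "perfect_matching d {A, B} (\<Union>?S - C)"
    using c by (auto simp: perfect_matching_def canonical_config_def)
  ultimately show ?thesis
    unfolding monomial_sunflower_def using canonical_msf_set[OF c] canonical_bicolouring[OF c]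
    by blast
qed

text \<open>Any two canonical configurations are isomorphic: glue bijections between
  the cores and between the corresponding matching edges.\<close>
lemma canonical_isomorphic:
  fixes C A B :: "'a set" and C' A' B' :: "'b set"
  assumes c: "canonical_config d C A B" and c': "canonical_config d C' A' B'"
  shows "mh_isomorphic (canonical_msf C A B) (canonical_msf C' A' B')"
proof -
  obtain fC fA fB where fC: "bij_betw fC C C'" and fA: "bij_betw fA A A'"
    and fB: "bij_betw fB B B'"
    using c c' finite_same_card_bij unfolding canonical_config_def by metis
  define f where "f x = (if x \<in> C then fC x else if x \<in> A then fA x else fB x)" for x
  have disj: "A \<inter> B = {}" "C \<inter> A = {}" "C \<inter> B = {}"
    using c by (auto simp: canonical_config_def)
  have bC: "bij_betw f C C'"
    using fC by (rule bij_betw_cong[THEN iffD1, rotated]) (simp add: f_def)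
  have bA: "bij_betw f A A'"
    using fA disj by (intro bij_betw_cong[THEN iffD1, OF _ fA]) (auto simp: f_def)
  have bB: "bij_betw f B B'"
    using fB disj by (intro bij_betw_cong[THEN iffD1, OF _ fB]) (auto simp: f_def)
  have f: "bij_betw f (C \<union> A \<union> B) (C' \<union> A' \<union> B')"
    using c' by (intro bij_betw_combine bC bA bB) (auto simp: canonical_config_def)
  have img: "f ` C = C'" "f ` A = A'" "f ` B = B'"
    using bC bA bB by (auto simp: bij_betw_def)
  have vertices: "\<Union>(set_mset (canonical_msf C A B)) = C \<union> A \<union> B"
    if "canonical_config d C A B" for C A B :: "'c set"
    using that canonical_config_nonempty[OF that]
    by (auto simp: canonical_msf_set petal_def)
  have half_image: "image_mset ((`) f) (mset_set (half C X Y)) = mset_set (half (f ` C) (f ` X) (f ` Y))"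
    if "X \<union> Y \<subseteq> C \<union> A \<union> B" "finite X" for X Y
  proof -
    have "\<Union>(half C X Y) \<subseteq> C \<union> A \<union> B" using that by (auto simp: half_def petal_def)
    then have "inj_on ((`) f) (half C X Y)"
      using f by (intro inj_on_image) (auto simp: bij_betw_def intro: inj_on_subset)
    moreover have "(`) f ` half C X Y = half (f ` C) (f ` X) (f ` Y)"
      by (auto simp: half_def petal_def image_image)
    ultimately show ?thesis by (simp add: image_mset_mset_set)
  qed
  have "finite A" "finite B" using c by (auto simp: canonical_config_def)
  then have "image_mset ((`) f) (mset_set (half C A B)) = mset_set (half (f ` C) (f ` A) (f ` B))"
    "image_mset ((`) f) (mset_set (half C B A)) = mset_set (half (f ` C) (f ` B) (f ` A))"
    by (auto intro!: half_image)
  then have "image_mset ((`) f) (canonical_msf C A B) = canonical_msf C' A' B'"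
    by (simp add: canonical_msf_def img)
  then show ?thesis
    unfolding mh_isomorphic_def vertices[OF c] vertices[OF c'] using f by blast
qed

section \<open>Monomial sunflowers whose core has d - 1 vertices\<close>

text \<open>A balanced pair of multisets sharing no edge; both the colour classes of a
  primitive bicolouring and sub-multisets of the canonical colour classes are
  of this kind.\<close>
definition separated_balanced :: "'a set multiset \<Rightarrow> 'a set multiset \<Rightarrow> bool" where
  "separated_balanced X Y \<longleftrightarrow> balanced X Y \<and> (\<forall>e. e \<notin># X \<or> e \<notin># Y)"

lemma separated_balanced_sym: "separated_balanced X Y \<Longrightarrow> separated_balanced Y X"
  by (auto simp: separated_balanced_def balanced_def)

locale maximal_core_msf =
  fixes d :: nat and H :: "'a set multiset" and S C M
  assumes msf: "monomial_sunflower d H S C M" and core_card: "card C = d - 1"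
begin

lemma S_card: "2 \<le> card S" and core_nonempty: "C \<noteq> {}"
  and petal_card: "P \<in> S \<Longrightarrow> finite P \<and> card P = d"
  and petals_meet: "P \<in> S \<Longrightarrow> Q \<in> S \<Longrightarrow> P \<noteq> Q \<Longrightarrow> P \<inter> Q = C"
  using msf by (auto simp: monomial_sunflower_def sunflower_def)

lemma matching_edge: "E \<in> M \<Longrightarrow> finite E \<and> card E = d \<and> E \<subseteq> \<Union>S - C"
  and matching_disjoint: "E \<in> M \<Longrightarrow> E' \<in> M \<Longrightarrow> E \<noteq> E' \<Longrightarrow> E \<inter> E' = {}"
  and matching_covers: "\<Union>M = \<Union>S - C"
  and H_set: "set_mset H = S \<union> M"
  using msf by (auto simp: monomial_sunflower_def perfect_matching_def)

lemma core_subset_petal: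
  assumes P: "P \<in> S" shows "C \<subseteq> P"
proof -
  have "\<not> S \<subseteq> {P}" using S_card card_mono[of "{P}" S] by auto
  then obtain Q where "Q \<in> S" "Q \<noteq> P" by blast
  then show ?thesis using petals_meet[OF P] by blast
qed

lemma finite_core: "finite C"
proof -
  obtain P where "P \<in> S" using S_card by fastforce
  then show ?thesis using core_subset_petal petal_card finite_subset by blast
qed

lemma two_le_d: "2 \<le> d"
proof -
  have "0 < card C" using finite_core core_nonempty by (simp add: card_gt_0_iff)
  then show ?thesis using core_card by linarith
qed

text \<open>Since the core misses only one vertex of each petal, every petal is the
  petal through its unique non-core vertex.\<close>
lemma petal_form:
  assumes P: "P \<in> S" shows "\<exists>x. x \<notin> C \<and> P = petal C x"
proof -
  have "card (P - C) = 1"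
    using core_subset_petal[OF P] petal_card[OF P] finite_core core_card two_le_d
    by (simp add: card_Diff_subset)
  then obtain x where "P - C = {x}" by (rule card_1_singletonE)
  then show ?thesis using core_subset_petal[OF P] by (auto simp: petal_def)
qed

lemma petal_through: "P \<in> S \<Longrightarrow> v \<in> P \<Longrightarrow> v \<notin> C \<Longrightarrow> P = petal C v"
  using petal_form by (fastforce simp: petal_def)

lemma matching_edge_avoids_core: "E \<in> M \<Longrightarrow> E \<inter> C = {}"
  using matching_edge by blast

lemma petal_not_matching: "E \<in> M \<Longrightarrow> petal C v \<noteq> E"
  using matching_edge_avoids_core core_nonempty by (auto simp: petal_def)

lemma degree_noncore:
  assumes Z: "set_mset Z \<subseteq> S \<union> M" and E: "E \<in> M" "v \<in> E"
  shows "size (filter_mset (\<lambda>e. v \<in> e) Z) = count Z (petal C v) + count Z E"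
proof -
  have "v \<in> \<Union>S - C" using matching_edge E by blast
  then have "v \<in> e \<longleftrightarrow> e = petal C v \<or> e = E" if "e \<in># Z" for e
    using that Z E petal_through[of e v] matching_disjoint[of e E]
    by (auto simp: petal_def)
  then have "filter_mset (\<lambda>e. v \<in> e) Z = filter_mset (\<lambda>e. e = petal C v \<or> e = E) Z"
    by (rule filter_mset_cong[OF refl])
  also have "\<dots> = replicate_mset (count Z (petal C v)) (petal C v) + replicate_mset (count Z E) E"
    using petal_not_matching[OF E(1), of v] by (auto simp: multiset_eq_iff)
  finally show ?thesis by simp
qed

lemma degree_core:
  assumes Z: "set_mset Z \<subseteq> S \<union> M" and z: "z \<in> C"
  shows "filter_mset (\<lambda>e. z \<in> e) Z = filter_mset (\<lambda>e. e \<in> S) Z"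
  using Z z core_subset_petal matching_edge_avoids_core by (intro filter_mset_cong) auto

context
  fixes X Y :: "'a set multiset"
  assumes sub: "set_mset X \<union> set_mset Y \<subseteq> S \<union> M" and sep: "separated_balanced X Y"
begin

lemma balanced_degrees: "size (filter_mset (\<lambda>e. v \<in> e) X) = size (filter_mset (\<lambda>e. v \<in> e) Y)"
  using sep by (simp add: separated_balanced_def balanced_def)

lemma separated: "e \<in># X \<Longrightarrow> count Y e = 0" "e \<in># Y \<Longrightarrow> count X e = 0"
  using sep by (metis separated_balanced_def count_eq_zero_iff)+

lemma colour_propagation:
  assumes a: "petal C a \<in># X" and E: "E \<in> M" "a \<in> E"
  shows "E \<in># Y \<and> (\<forall>y\<in>E. petal C y \<in># X)"
proof -
  have degrees: "count X (petal C v) + count X E = count Y (petal C v) + count Y E"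
    if "v \<in> E" for v
    using balanced_degrees[of v] degree_noncore[OF _ E(1) that] sub by auto
  have "count Y (petal C a) = 0" using a by (rule separated)
  moreover have "0 < count X (petal C a)" using a by simp
  ultimately have "0 < count Y E" using degrees[OF E(2)] by linarith
  then have "E \<in># Y" by simp
  then have "count X E = 0" by (rule separated)
  then have "petal C y \<in># X" if "y \<in> E" for y
    using degrees[OF that] \<open>0 < count Y E\<close> by (simp flip: count_greater_zero_iff)
  with \<open>E \<in># Y\<close> show ?thesis by blast
qed

text \<open>Counting at a core vertex: if X contains a petal then so does Y.\<close>
lemma petal_in_other_colour:
  assumes "P \<in> S" "P \<in># X" shows "\<exists>Q\<in>S. Q \<in># Y"
proof -
  obtain z where z: "z \<in> C" using core_nonempty by blast
  have "size (filter_mset (\<lambda>e. e \<in> S) X) = size (filter_mset (\<lambda>e. e \<in> S) Y)"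
    using balanced_degrees[of z] degree_core[OF _ z, of X] degree_core[OF _ z, of Y] sub
    by simp
  moreover have "P \<in># filter_mset (\<lambda>e. e \<in> S) X" using assms by simp
  ultimately have "filter_mset (\<lambda>e. e \<in> S) Y \<noteq> {#}"
    by (metis size_eq_0_iff_empty empty_iff set_mset_empty)
  then obtain Q where "Q \<in># filter_mset (\<lambda>e. e \<in> S) Y" by blast
  then show ?thesis by auto
qed

text \<open>Without petals a balanced separated pair is empty: a matching edge in X
  would have to be matched by the same edge in Y.\<close>
lemma petal_free_empty:
  assumes "\<forall>P\<in>S. P \<notin># X \<and> P \<notin># Y" shows "X = {#}"
proof (rule ccontr)
  assume "X \<noteq> {#}"
  then obtain E where "E \<in># X" by blast
  then have E: "E \<in> M" using sub assms by auto
  then obtain v where v: "v \<in> E" using matching_edge two_le_d by fastforce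
  have "petal C v \<in> S" using matching_edge[OF E] v petal_through by blast
  then have "count X E = count Y E"
    using balanced_degrees[of v] degree_noncore[OF _ E v] sub assms by (simp add: not_in_iff)
  then show False using separated(1)[OF \<open>E \<in># X\<close>] \<open>E \<in># X\<close> by (simp add: count_eq_zero_iff)
qed

end

lemma balanced_pair_contains_canonical:
  assumes sub: "set_mset X \<union> set_mset Y \<subseteq> S \<union> M" and sep: "separated_balanced X Y"
    and ne: "X + Y \<noteq> {#}"
  shows "\<exists>A B. A \<in> M \<and> B \<in> M \<and> canonical_config d C A B \<and>
           mset_set (half C A B) \<subseteq># X \<and> mset_set (half C B A) \<subseteq># Y"
proof -
  have sub': "set_mset Y \<union> set_mset X \<subseteq> S \<union> M" and sep': "separated_balanced Y X"
    using sub sep separated_balanced_sym by auto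
  have petal_X: "\<exists>P\<in>S. P \<in># X"
    using ne petal_free_empty[OF sub sep] petal_free_empty[OF sub' sep']
      petal_in_other_colour[OF sub' sep'] by fastforce
  have petal_petal: "\<exists>a E. E \<in> M \<and> a \<in> E \<and> petal C a \<in># Z"
    if P: "P \<in> S" and PZ: "P \<in># Z" for P and Z :: "'a set multiset"
  proof -
    obtain a where a: "a \<notin> C" "P = petal C a" using petal_form[OF P] by blast
    then obtain E where "E \<in> M" "a \<in> E"
      using matching_covers P by (auto simp: petal_def)
    then show ?thesis using a PZ by blast
  qed
  obtain a A where A: "A \<in> M" "a \<in> A" "petal C a \<in># X" using petal_X petal_petal by blast
  obtain P where "P \<in> S" "P \<in># Y" using petal_in_other_colour[OF sub sep] petal_X by blast
  then obtain b B where B: "B \<in> M" "b \<in> B" "petal C b \<in># Y" using petal_petal by blast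
  note propA = colour_propagation[OF sub sep A(3) A(1,2)]
  note propB = colour_propagation[OF sub' sep' B(3) B(1,2)]
  have "A \<noteq> B" using propA propB sep by (auto simp: separated_balanced_def)
  then have "canonical_config d C A B"
    using two_le_d finite_core core_card matching_edge[OF A(1)] matching_edge[OF B(1)]
      matching_disjoint[OF A(1) B(1)] by (auto simp: canonical_config_def)
  moreover have "finite A" "finite B" using matching_edge A B by auto
  then have "mset_set (half C A B) \<subseteq># X" "mset_set (half C B A) \<subseteq># Y"
    using propA propB by (auto simp: subseteq_mset_def count_mset_set' half_def
        Suc_le_eq count_greater_zero_iff)
  ultimately show ?thesis using A B by blast
qed

end

text \<open>A primitive bicolouring is separated (an edge coloured both ways would be
  a balanced sub-multiset on its own), so by the key lemma H contains a
  canonical configuration; minimality forces H to be exactly that.\<close>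
lemma (in maximal_core_msf) primitive_is_canonical:
  assumes "primitive H"
  shows "\<exists>A B. canonical_config d C A B \<and> H = canonical_msf C A B \<and>
           S = petal C ` (A \<union> B) \<and> M = {A, B}"
proof -
  obtain Red Blue where colouring: "Red + Blue = H" "balanced Red Blue"
    and minimal: "\<And>R' B'. R' \<subseteq># Red \<Longrightarrow> B' \<subseteq># Blue \<Longrightarrow> R' + B' \<noteq> {#} \<Longrightarrow>
                      balanced R' B' \<Longrightarrow> R' + B' = H"
    using assms unfolding primitive_def balanced_bicolouring_def by blast
  have "e \<notin># Red \<or> e \<notin># Blue" for e
  proof (rule ccontr)
    assume "\<not> ?thesis"
    then have "{#e#} + {#e#} = H" by (intro minimal) (auto simp: balanced_def)
    then have "S \<subseteq> {e}" using H_set by auto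
    then show False using S_card card_mono[of "{e}" S] by auto
  qed
  then have sep: "separated_balanced Red Blue"
    using colouring by (simp add: separated_balanced_def)
  have colours_cover: "set_mset Red \<union> set_mset Blue = S \<union> M"
    using H_set colouring(1) by (metis set_mset_union)
  then have sub: "set_mset Red \<union> set_mset Blue \<subseteq> S \<union> M" by blast
  have "S \<noteq> {}" using S_card by auto
  then have "Red + Blue \<noteq> {#}" using colours_cover by auto
  then obtain A B where AB: "A \<in> M" "B \<in> M" and c: "canonical_config d C A B"
    and in_colours: "mset_set (half C A B) \<subseteq># Red" "mset_set (half C B A) \<subseteq># Blue"
    using balanced_pair_contains_canonical[OF sub sep] by blast
  have "canonical_msf C A B \<noteq> {#}" using canonical_msf_counts(2)[OF c] by auto
  then have H: "H = canonical_msf C A B"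
    using minimal[OF in_colours] canonical_balanced[OF c] by (simp add: canonical_msf_def)
  have SM: "S \<union> M = petal C ` (A \<union> B) \<union> {A, B}"
    using H_set canonical_msf_set[OF c] H by simp
  obtain z where z: "z \<in> C" using core_nonempty by blast
  have "z \<notin> A" "z \<notin> B" using c z by (auto simp: canonical_config_def)
  then have "P \<in> petal C ` (A \<union> B)" if "P \<in> S" for P
    using that SM z core_subset_petal[OF that] by blast
  moreover have "petal C x \<in> S" if "x \<in> A \<union> B" for x
    using that SM petal_not_matching[of "petal C x"] by blast
  ultimately have "S = petal C ` (A \<union> B)" by blast
  moreover have "E \<in> {A, B}" if E: "E \<in> M" for E
  proof -
    have "E \<notin> petal C ` (A \<union> B)" using petal_not_matching[OF E] by blast
    then show ?thesis using E SM by blast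
  qed
  then have "M = {A, B}" using AB by blast
  ultimately show ?thesis using c H by blast
qed

text \<open>Conversely, the canonical configuration is primitive: a balanced pair of
  sub-multisets of its two halves is separated, so by the key lemma it
  already contains both halves.\<close>
lemma canonical_primitive:
  assumes c: "canonical_config d C A B"
  shows "primitive (canonical_msf C A B)"
proof -
  interpret maximal_core_msf d "canonical_msf C A B" "petal C ` (A \<union> B)" C "{A, B}"
    using canonical_is_monomial_sunflower[OF c] c
    by unfold_locales (simp_all add: canonical_config_def)
  let ?R = "mset_set (half C A B)" and ?B = "mset_set (half C B A)"
  have fin: "finite (half C A B)" "finite (half C B A)"
    using c by (auto simp: half_def canonical_config_def)
  have full: "R' + B' = canonical_msf C A B"
    if R': "R' \<subseteq># ?R" and B': "B' \<subseteq># ?B" and ne: "R' + B' \<noteq> {#}" and bal: "balanced R' B'"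
    for R' B'
  proof -
    have in_halves: "set_mset R' \<subseteq> half C A B" "set_mset B' \<subseteq> half C B A"
      using set_mset_mono[OF R'] set_mset_mono[OF B'] fin by auto
    then have sep: "separated_balanced R' B'"
      unfolding separated_balanced_def using bal half_facts(1)[OF c] by blast
    moreover have "half C A B \<union> half C B A = petal C ` (A \<union> B) \<union> {A, B}"
      by (auto simp: half_def)
    then have sub: "set_mset R' \<union> set_mset B' \<subseteq> petal C ` (A \<union> B) \<union> {A, B}"
      using in_halves by blast
    obtain A0 B0 where AB0: "A0 \<in> {A, B}" "B0 \<in> {A, B}"
      and c0: "canonical_config d C A0 B0"
      and sub0: "mset_set (half C A0 B0) \<subseteq># R'" "mset_set (half C B0 A0) \<subseteq># B'"
      using balanced_pair_contains_canonical[OF sub sep ne] by blast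
    have "finite (half C A0 B0)" using c0 by (simp add: half_def canonical_config_def)
    then have "B0 \<in> set_mset R'"
      using set_mset_mono[OF sub0(1)] by (auto simp: half_def)
    then have "B0 = B" using AB0 in_halves(1) half_facts(2)[OF c] by auto
    moreover have "A0 \<noteq> B0"
      using c0 canonical_config_nonempty[OF c0] by (auto simp: canonical_config_def)
    ultimately have "A0 = A" using AB0 by auto
    have "R' = ?R" using subset_mset.antisym[OF R'] sub0(1) \<open>A0 = A\<close> \<open>B0 = B\<close> by simp
    moreover have "B' = ?B" using subset_mset.antisym[OF B'] sub0(2) \<open>A0 = A\<close> \<open>B0 = B\<close> by simp
    ultimately show ?thesis by (simp add: canonical_msf_def)
  qed
  show ?thesis
    unfolding primitive_def
  proof (intro exI conjI notI)
    show "balanced_bicolouring (canonical_msf C A B) ?R ?B" by (rule canonical_bicolouring[OF c])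
  next
    assume "\<exists>R' B'. R' \<subseteq># ?R \<and> B' \<subseteq># ?B \<and> R' + B' \<noteq> {#} \<and>
              R' + B' \<noteq> canonical_msf C A B \<and> balanced R' B'"
    then obtain R' B' where "R' \<subseteq># ?R" "B' \<subseteq># ?B" "R' + B' \<noteq> {#}"
      "R' + B' \<noteq> canonical_msf C A B" "balanced R' B'" by blast
    then show False using full by blast
  qed
qed

theorem mainTheorem9:
  fixes d :: nat
  assumes "d \<ge> 2"
  shows "(\<exists>(H :: nat set multiset) S C M.
            monomial_sunflower d H S C M \<and> card C = d - 1 \<and> primitive H)
       \<and> (\<forall>(H :: 'a set multiset) S C M (H' :: 'b set multiset) S' C' M'.
            monomial_sunflower d H S C M \<and> card C = d - 1 \<and> primitive H \<and>
            monomial_sunflower d H' S' C' M' \<and> card C' = d - 1 \<and> primitive H'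
            \<longrightarrow> mh_isomorphic H H')
       \<and> (\<forall>(H :: 'a set multiset) S C M.
            monomial_sunflower d H S C M \<and> card C = d - 1 \<and> primitive H
            \<longrightarrow> (\<forall>e. count H e \<le> 1) \<and> size H = 2 * d + 2 \<and>
                card S = 2 * d \<and> card M = 2)"
proof (rule conjI[OF _ conjI]; (intro allI impI)?)
  have "canonical_config d {2 * d..<3 * d - 1} {0..<d} {d..<2 * d}"
    using assms by (auto simp: canonical_config_def)
  then show "\<exists>(H :: nat set multiset) S C M.
      monomial_sunflower d H S C M \<and> card C = d - 1 \<and> primitive H"
    using canonical_is_monomial_sunflower canonical_primitive
    by (metis canonical_config_def)
next
  fix H :: "'a set multiset" and S C M and H' :: "'b set multiset" and S' C' M'
  assume "monomial_sunflower d H S C M \<and> card C = d - 1 \<and> primitive H \<and>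
          monomial_sunflower d H' S' C' M' \<and> card C' = d - 1 \<and> primitive H'"
  then obtain A B A' B' where "canonical_config d C A B" "H = canonical_msf C A B"
    "canonical_config d C' A' B'" "H' = canonical_msf C' A' B'"
    using maximal_core_msf.primitive_is_canonical[OF maximal_core_msf.intro] by meson
  then show "mh_isomorphic H H'" using canonical_isomorphic by blast
next
  fix H :: "'a set multiset" and S C M
  assume "monomial_sunflower d H S C M \<and> card C = d - 1 \<and> primitive H"
  then obtain A B where "canonical_config d C A B" "H = canonical_msf C A B"
    "S = petal C ` (A \<union> B)" "M = {A, B}"
    using maximal_core_msf.primitive_is_canonical[OF maximal_core_msf.intro] by meson
  then show "(\<forall>e. count H e \<le> 1) \<and> size H = 2 * d + 2 \<and> card S = 2 * d \<and> card M = 2"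
    using canonical_msf_counts by blast
qed

end
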